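(* Fix $n\in\mathbb{N}$ and consider unknown complex-valued functions $f_j$ $(0\le j\le n+1)$, $\psi_l,\varphi_l$ $(0\le l\le n)$, with the convention that $f_j,\psi_l,\varphi_l$ are zero for indices outside these ranges, and set (where $f_{n+1}\ne0$) $$a=\frac{\psi_n}{f_{n+1}},\quad b=-\frac{\varphi_n}{f_{n+1}},\quad c=2i\Big(\frac{\psi_nf_n}{f_{n+1}^2}-\frac{\psi_{n-1}}{f_{n+1}}\Big),\quad d=2i\Big(\frac{\varphi_nf_n}{f_{n+1}^2}-\frac{\varphi_{n-1}}{f_{n+1}}\Big).$$ Consider the autonomous system of ODEs in $t$ $$\dot f_j=d\psi_j-c\varphi_j+2ib\psi_{j-1}+2ia\varphi_{j-1}\ (0\le j\le n+1),$$ $$\dot\psi_l=-2cf_l+4iaf_{l-1}+2iab\psi_l-4i\psi_{l-2},\quad \dot\varphi_l=2df_l+4ibf_{l-1}-2iab\varphi_l+4i\varphi_{l-2}\ (0\le l\le n),$$ and the autonomous system of ODEs in $x$ $$f_j'=ib\psi_j+ia\varphi_j\ (0\le j\le n+1),\quad \psi_l'=2iaf_l-2i\psi_{l-1},\quad \varphi_l'=2ibf_l+2i\varphi_{l-1}\ (0\le l\le n).$$ Suppose the initial data (with $f_{n+1}\neq0$) satisfy the symmetry conditions $f_j=\overline{f_j}$ for all $j$ and $\varphi_l=-\overline{\psi_l}$ for all $l$. Then the system in $t$ has a solution defined for all $t\in\mathbb{R}$, and likewise the system in $x$ has a solution defined for all $x\in\mathbb{R}$; these solutions satisfy $f_j=\overline{f_j}$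 and $\varphi_l=-\overline{\psi_l}$ for all $t$ (respectively all $x$). *)

theory Defs
  imports "HOL-Analysis.Analysis"
begin

text \<open>State variables are sequences indexed by nat.  f is used on indices 0..n+1,
  psi and phi on 0..n; all are read as zero outside these ranges, and negative
  indices (j-1, l-2) are read as zero via shiftz.\<close>

definition cutoff :: "nat \<Rightarrow> (nat \<Rightarrow> complex) \<Rightarrow> nat \<Rightarrow> complex" where
  "cutoff m g j = (if j \<le> m then g j else 0)"

definition shiftz :: "nat \<Rightarrow> (nat \<Rightarrow> complex) \<Rightarrow> nat \<Rightarrow> complex" where
  "shiftz k g j = (if k \<le> j then g (j - k) else 0)"

definition coef_a :: "nat \<Rightarrow> (nat \<Rightarrow> complex) \<Rightarrow> (nat \<Rightarrow> complex) \<Rightarrow> (nat \<Rightarrow> complex) \<Rightarrow> complex" where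
  "coef_a n f psi phi = psi n / f (Suc n)"

definition coef_b :: "nat \<Rightarrow> (nat \<Rightarrow> complex) \<Rightarrow> (nat \<Rightarrow> complex) \<Rightarrow> (nat \<Rightarrow> complex) \<Rightarrow> complex" where
  "coef_b n f psi phi = - phi n / f (Suc n)"

definition coef_c :: "nat \<Rightarrow> (nat \<Rightarrow> complex) \<Rightarrow> (nat \<Rightarrow> complex) \<Rightarrow> (nat \<Rightarrow> complex) \<Rightarrow> complex" where
  "coef_c n f psi phi = 2 * \<i> * (psi n * f n / (f (Suc n))^2 - shiftz 1 psi n / f (Suc n))"

definition coef_d :: "nat \<Rightarrow> (nat \<Rightarrow> complex) \<Rightarrow> (nat \<Rightarrow> complex) \<Rightarrow> (nat \<Rightarrow> complex) \<Rightarrow> complex" where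
  "coef_d n f psi phi = 2 * \<i> * (phi n * f n / (f (Suc n))^2 - shiftz 1 phi n / f (Suc n))"

definition t_rhs_f :: "nat \<Rightarrow> (nat \<Rightarrow> complex) \<Rightarrow> (nat \<Rightarrow> complex) \<Rightarrow> (nat \<Rightarrow> complex) \<Rightarrow> nat \<Rightarrow> complex" where
  "t_rhs_f n f psi phi j =
     (let a = coef_a n f psi phi; b = coef_b n f psi phi;
          c = coef_c n f psi phi; d = coef_d n f psi phi;
          P = cutoff n psi; Q = cutoff n phi
      in d * P j - c * Q j + 2 * \<i> * b * shiftz 1 P j + 2 * \<i> * a * shiftz 1 Q j)"

definition t_rhs_psi :: "nat \<Rightarrow> (nat \<Rightarrow> complex) \<Rightarrow> (nat \<Rightarrow> complex) \<Rightarrow> (nat \<Rightarrow> complex) \<Rightarrow> nat \<Rightarrow> complex" where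
  "t_rhs_psi n f psi phi l =
     (let a = coef_a n f psi phi; b = coef_b n f psi phi;
          c = coef_c n f psi phi;
          F = cutoff (Suc n) f; P = cutoff n psi
      in - 2 * c * F l + 4 * \<i> * a * shiftz 1 F l + 2 * \<i> * a * b * P l - 4 * \<i> * shiftz 2 P l)"

definition t_rhs_phi :: "nat \<Rightarrow> (nat \<Rightarrow> complex) \<Rightarrow> (nat \<Rightarrow> complex) \<Rightarrow> (nat \<Rightarrow> complex) \<Rightarrow> nat \<Rightarrow> complex" where
  "t_rhs_phi n f psi phi l =
     (let a = coef_a n f psi phi; b = coef_b n f psi phi;
          d = coef_d n f psi phi;
          F = cutoff (Suc n) f; Q = cutoff n phi
      in 2 * d * F l + 4 * \<i> * b * shiftz 1 F l - 2 * \<i> * a * b * Q l + 4 * \<i> * shiftz 2 Q l)"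

definition x_rhs_f :: "nat \<Rightarrow> (nat \<Rightarrow> complex) \<Rightarrow> (nat \<Rightarrow> complex) \<Rightarrow> (nat \<Rightarrow> complex) \<Rightarrow> nat \<Rightarrow> complex" where
  "x_rhs_f n f psi phi j =
     (let a = coef_a n f psi phi; b = coef_b n f psi phi;
          P = cutoff n psi; Q = cutoff n phi
      in \<i> * b * P j + \<i> * a * Q j)"

definition x_rhs_psi :: "nat \<Rightarrow> (nat \<Rightarrow> complex) \<Rightarrow> (nat \<Rightarrow> complex) \<Rightarrow> (nat \<Rightarrow> complex) \<Rightarrow> nat \<Rightarrow> complex" where
  "x_rhs_psi n f psi phi l =
     (let a = coef_a n f psi phi;
          F = cutoff (Suc n) f; P = cutoff n psi
      in 2 * \<i> * a * F l - 2 * \<i> * shiftz 1 P l)"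

definition x_rhs_phi :: "nat \<Rightarrow> (nat \<Rightarrow> complex) \<Rightarrow> (nat \<Rightarrow> complex) \<Rightarrow> (nat \<Rightarrow> complex) \<Rightarrow> nat \<Rightarrow> complex" where
  "x_rhs_phi n f psi phi l =
     (let b = coef_b n f psi phi;
          F = cutoff (Suc n) f; Q = cutoff n phi
      in 2 * \<i> * b * F l + 2 * \<i> * shiftz 1 Q l)"

text \<open>A global solution on all of the real line with prescribed data at 0 for an
  autonomous system with right-hand sides (rf, rpsi, rphi); f_{n+1} must stay nonzero
  so that the coefficients are defined along the solution.\<close>

definition global_solution ::
  "nat \<Rightarrow> ((nat \<Rightarrow> complex) \<Rightarrow> (nat \<Rightarrow> complex) \<Rightarrow> (nat \<Rightarrow> complex) \<Rightarrow> nat \<Rightarrow> complex)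
       \<Rightarrow> ((nat \<Rightarrow> complex) \<Rightarrow> (nat \<Rightarrow> complex) \<Rightarrow> (nat \<Rightarrow> complex) \<Rightarrow> nat \<Rightarrow> complex)
       \<Rightarrow> ((nat \<Rightarrow> complex) \<Rightarrow> (nat \<Rightarrow> complex) \<Rightarrow> (nat \<Rightarrow> complex) \<Rightarrow> nat \<Rightarrow> complex)
       \<Rightarrow> (nat \<Rightarrow> complex) \<Rightarrow> (nat \<Rightarrow> complex) \<Rightarrow> (nat \<Rightarrow> complex)
       \<Rightarrow> (real \<Rightarrow> nat \<Rightarrow> complex) \<Rightarrow> (real \<Rightarrow> nat \<Rightarrow> complex) \<Rightarrow> (real \<Rightarrow> nat \<Rightarrow> complex) \<Rightarrow> bool" where
  "global_solution n rf rpsi rphi f0 psi0 phi0 F P Q \<longleftrightarrow>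
     (\<forall>j\<le>Suc n. F 0 j = f0 j) \<and> (\<forall>l\<le>n. P 0 l = psi0 l \<and> Q 0 l = phi0 l) \<and>
     (\<forall>t::real. F t (Suc n) \<noteq> 0) \<and>
     (\<forall>t::real. \<forall>j\<le>Suc n.
        ((\<lambda>s. F s j) has_vector_derivative rf (F t) (P t) (Q t) j) (at t)) \<and>
     (\<forall>t::real. \<forall>l\<le>n.
        ((\<lambda>s. P s l) has_vector_derivative rpsi (F t) (P t) (Q t) l) (at t) \<and>
        ((\<lambda>s. Q s l) has_vector_derivative rphi (F t) (P t) (Q t) l) (at t))"

end

(*
  Both systems preserve the symmetry (f_j real, phi_l = - cnj psi_l) and keep f_(n+1) constant, so it
  suffices to solve for the real f_0, ..., f_n and the complex psi_0, ..., psi_n.  Along solutions the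
  polynomial

    H(X) = F(X)^2 - Psi(X) * Phi(X),   F(X) = sum f_j X^j,  Psi(X) = sum psi_l X^l,  Phi(X) = sum phi_l X^l,

  is conserved for every X, and for real X it equals F(X)^2 + |Psi(X)|^2.  Its values at
  X = 0, ..., n+1 therefore bound F and Psi at n+2 points and hence, by interpolation, all
  coefficients.  Consequently the flow of the vector field cut off outside a large ball, which
  exists for all times by Picard iteration, never reaches the region where the cutoff acts.
*)

theory Submission
  imports Defs "HOL-Probability.Discrete_Topology" "HOL-Computational_Algebra.Polynomial"
begin

section \<open>Global solutions of globally Lipschitz autonomous equations\<close>

lemma integral_power_from_0:
  assumes "0 \<le> t"
  shows "integral {0..t} (\<lambda>s::real. s ^ k) = t ^ Suc k / Suc k"
proof -
  have "((\<lambda>s::real. s ^ k) has_integral (t ^ Suc k / Suc k - 0 ^ Suc k / Suc k)) {0..t}"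
  proof (rule fundamental_theorem_of_calculus[OF assms])
    fix s assume "s \<in> {0..t}"
    show "((\<lambda>s. s ^ Suc k / Suc k) has_vector_derivative s ^ k) (at s within {0..t})"
      unfolding has_real_derivative_iff_has_vector_derivative[symmetric]
      by (rule derivative_eq_intros refl | simp)+
  qed
  then show ?thesis by (simp add: integral_unique)
qed

primrec picard_iterate :: "('v::banach \<Rightarrow> 'v) \<Rightarrow> 'v \<Rightarrow> nat \<Rightarrow> real \<Rightarrow> 'v" where
  "picard_iterate G x\<^sub>0 0 t = x\<^sub>0"
| "picard_iterate G x\<^sub>0 (Suc k) t = x\<^sub>0 + integral {0..t} (\<lambda>s. G (picard_iterate G x\<^sub>0 k s))"

declare picard_iterate.simps(2) [simp del]

lemma continuous_on_integral_from_0: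
  fixes g :: "real \<Rightarrow> 'v::banach"
  assumes "continuous_on {0..b} g"
  shows "continuous_on {0..b} (\<lambda>t. integral {0..t} g)"
proof -
  have "continuous (at t within {0..b}) (\<lambda>t. integral {0..t} g)" if "t \<in> {0..b}" for t
    using integral_has_vector_derivative[OF assms that] by (rule has_vector_derivative_continuous)
  then show ?thesis by (simp add: continuous_on_eq_continuous_within)
qed

lemma continuous_on_picard_iterate:
  assumes "continuous_on UNIV G"
  shows "continuous_on {0..b} (picard_iterate G x\<^sub>0 k)"
proof (induction k)
  case (Suc k)
  have "continuous_on {0..b} (\<lambda>s. G (picard_iterate G x\<^sub>0 k s))"
    using continuous_on_compose2[OF assms Suc.IH] by simp
  then show ?case
    unfolding picard_iterate.simps(2)[abs_def] by (intro continuous_intros continuous_on_integral_from_0)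
qed simp

lemma continuous_on_field_picard_iterate:
  assumes "continuous_on UNIV G"
  shows "continuous_on {0..b} (\<lambda>s. G (picard_iterate G x\<^sub>0 k s))"
  using continuous_on_compose2[OF assms continuous_on_picard_iterate[OF assms]] by simp

lemmas picard_iterate_integrable = integrable_continuous_real[OF continuous_on_field_picard_iterate]

lemma picard_iterate_step_bound:
  fixes G :: "'v::banach \<Rightarrow> 'v"
  assumes lip: "L-lipschitz_on UNIV G" and "0 \<le> t"
  shows "norm (picard_iterate G x\<^sub>0 (Suc k) t - picard_iterate G x\<^sub>0 k t)
           \<le> norm (G x\<^sub>0) * L ^ k * t ^ Suc k / fact (Suc k)"
  using \<open>0 \<le> t\<close>
proof (induction k arbitrary: t)
  case 0
  then show ?case by (simp add: picard_iterate.simps(2))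
next
  case (Suc k)
  have cont: "continuous_on UNIV G" using lipschitz_on_continuous_on[OF lip] .
  let ?C = "L * (norm (G x\<^sub>0) * L ^ k / fact (Suc k))"
  have "norm (picard_iterate G x\<^sub>0 (Suc (Suc k)) t - picard_iterate G x\<^sub>0 (Suc k) t)
      = norm (integral {0..t} (\<lambda>s. G (picard_iterate G x\<^sub>0 (Suc k) s) - G (picard_iterate G x\<^sub>0 k s)))"
    unfolding picard_iterate.simps(2)[of G x\<^sub>0 "Suc k" t] picard_iterate.simps(2)[of G x\<^sub>0 k t]
    by (simp add: integral_diff picard_iterate_integrable[OF cont])
  also have "\<dots> \<le> integral {0..t} (\<lambda>s. ?C * s ^ Suc k)"
  proof (rule integral_norm_bound_integral)
    fix s assume s: "s \<in> {0..t}"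
    have "norm (G (picard_iterate G x\<^sub>0 (Suc k) s) - G (picard_iterate G x\<^sub>0 k s))
        \<le> L * norm (picard_iterate G x\<^sub>0 (Suc k) s - picard_iterate G x\<^sub>0 k s)"
      using lipschitz_on_normD[OF lip] by simp
    also have "\<dots> \<le> L * (norm (G x\<^sub>0) * L ^ k * s ^ Suc k / fact (Suc k))"
      using Suc.IH[of s] s lipschitz_on_nonneg[OF lip] by (intro mult_left_mono) auto
    also have "\<dots> = ?C * s ^ Suc k" by simp
    finally show "norm (G (picard_iterate G x\<^sub>0 (Suc k) s) - G (picard_iterate G x\<^sub>0 k s)) \<le> ?C * s ^ Suc k" .
  qed (auto intro!: integrable_diff picard_iterate_integrable[OF cont]
      continuous_on_field_picard_iterate[OF cont] integrable_continuous_real continuous_intros)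
  also have "\<dots> = ?C * (t ^ Suc (Suc k) / Suc (Suc k))"
    unfolding integral_mult_right integral_power_from_0[OF Suc.prems] ..
  also have "\<dots> = norm (G x\<^sub>0) * L ^ Suc k * t ^ Suc (Suc k) / fact (Suc (Suc k))"
    by (simp add: field_simps)
  finally show ?case .
qed

lemma picard_iterate_uniform_limit:
  fixes G :: "'v::banach \<Rightarrow> 'v"
  assumes lip: "L-lipschitz_on UNIV G"
  obtains u where "\<And>b. 0 \<le> b \<Longrightarrow> uniform_limit {0..b} (picard_iterate G x\<^sub>0) u sequentially"
proof
  define d where "d i t = picard_iterate G x\<^sub>0 (Suc i) t - picard_iterate G x\<^sub>0 i t" for i t
  have telescope: "picard_iterate G x\<^sub>0 k t = x\<^sub>0 + (\<Sum>i<k. d i t)" for k t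
    unfolding d_def using sum_lessThan_telescope[of "\<lambda>i. picard_iterate G x\<^sub>0 i t" k] by simp
  fix b :: real assume "0 \<le> b"
  define M where "M i = norm (G x\<^sub>0) * b * ((L * b) ^ i /\<^sub>R fact i)" for i
  have "uniform_limit {0..b} (\<lambda>k t. \<Sum>i<k. d i t) (\<lambda>t. \<Sum>i. d i t) sequentially"
  proof (rule Weierstrass_m_test)
    show "summable M" unfolding M_def by (intro summable_mult summable_exp_generic)
    fix i t assume t: "t \<in> {0..b}"
    have L: "0 \<le> L" using lipschitz_on_nonneg[OF lip] .
    have "norm (d i t) \<le> norm (G x\<^sub>0) * L ^ i * t ^ Suc i / fact (Suc i)"
      unfolding d_def using picard_iterate_step_bound[OF lip] t by simp
    also have "\<dots> \<le> norm (G x\<^sub>0) * L ^ i * b ^ Suc i / fact i"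
      using t L by (intro frac_le mult_left_mono power_mono fact_mono) auto
    also have "\<dots> = M i" by (simp add: M_def power_mult_distrib field_simps)
    finally show "norm (d i t) \<le> M i" .
  qed
  then show "uniform_limit {0..b} (picard_iterate G x\<^sub>0) (\<lambda>t. x\<^sub>0 + (\<Sum>i. d i t)) sequentially"
    unfolding telescope by (intro uniform_limit_add uniform_limit_const)
qed

lemma picard_limit_integral_equation:
  fixes G :: "'v::banach \<Rightarrow> 'v"
  assumes lip: "L-lipschitz_on UNIV G"
    and lim: "\<And>b. 0 \<le> b \<Longrightarrow> uniform_limit {0..b} (picard_iterate G x\<^sub>0) u sequentially"
    and "0 \<le> t"
  shows "u t = x\<^sub>0 + integral {0..t} (\<lambda>s. G (u s))"
proof -
  have cont: "continuous_on UNIV G" using lipschitz_on_continuous_on[OF lip] .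
  have "uniform_limit {0..t} (\<lambda>k s. G (picard_iterate G x\<^sub>0 k s)) (G \<circ> u) sequentially"
    using lipschitz_on_uniformly_continuous[OF lip] by (intro uniform_limit_compose[OF lim]) (use assms in auto)
  then obtain I J where I: "\<And>k. ((\<lambda>s. G (picard_iterate G x\<^sub>0 k s)) has_integral I k) {0..t}"
      and J: "((\<lambda>s. G (u s)) has_integral J) {0..t}" and "I \<longlonglongrightarrow> J"
    by (rule uniform_limit_integral) (use continuous_on_field_picard_iterate[OF cont] in \<open>auto simp: o_def\<close>)
  moreover have "integral {0..t} (\<lambda>s. G (picard_iterate G x\<^sub>0 k s)) = I k" for k
    using I by (rule integral_unique)
  ultimately have "(\<lambda>k. picard_iterate G x\<^sub>0 (Suc k) t) \<longlonglongrightarrow> x\<^sub>0 + J"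
    by (simp add: picard_iterate.simps(2) tendsto_add)
  moreover have "(\<lambda>k. picard_iterate G x\<^sub>0 (Suc k) t) \<longlonglongrightarrow> u t"
    using LIMSEQ_Suc[OF tendsto_uniform_limitI[OF lim]] \<open>0 \<le> t\<close> by auto
  ultimately show ?thesis
    using J LIMSEQ_unique integral_unique by metis
qed

lemma lipschitz_ode_forward_solution:
  fixes G :: "'v::banach \<Rightarrow> 'v"
  assumes lip: "L-lipschitz_on UNIV G"
  obtains u where "u 0 = x\<^sub>0" "\<And>t. 0 \<le> t \<Longrightarrow> (u has_vector_derivative G (u t)) (at t within {0..})"
proof -
  obtain u where lim: "\<And>b. 0 \<le> b \<Longrightarrow> uniform_limit {0..b} (picard_iterate G x\<^sub>0) u sequentially"
    using picard_iterate_uniform_limit[OF lip, where x\<^sub>0 = x\<^sub>0] by blast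
  note u_eq = picard_limit_integral_equation[OF lip lim]
  have "(u has_vector_derivative G (u t)) (at t within {0..})" if "0 \<le> t" for t
  proof -
    have "continuous_on {0..t + 1} u"
      using that continuous_on_picard_iterate[OF lipschitz_on_continuous_on[OF lip]]
      by (intro uniform_limit_theorem[OF _ lim]) auto
    then have "continuous_on {0..t + 1} (\<lambda>s. G (u s))"
      using continuous_on_compose2[OF lipschitz_on_continuous_on[OF lip]] by blast
    from has_vector_derivative_add[OF has_vector_derivative_const integral_has_vector_derivative[OF this]] that
    have "((\<lambda>s. x\<^sub>0 + integral {0..s} (\<lambda>s. G (u s))) has_vector_derivative G (u t)) (at t within {0..t + 1})"
      by simp
    then have "(u has_vector_derivative G (u t)) (at t within {0..t + 1})"
      by (rule has_vector_derivative_transform[rotated 2]) (use that u_eq in auto)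
    moreover have "at t within {0..t + 1} = at t within {0..}"
      by (rule at_within_nhd[of _ "{..<t + 1}"]) auto
    ultimately show ?thesis by simp
  qed
  moreover have "u 0 = x\<^sub>0" using u_eq[of 0] by simp
  ultimately show ?thesis using that by blast
qed

lemma lipschitz_ode_backward_solution:
  fixes G :: "'v::banach \<Rightarrow> 'v"
  assumes lip: "L-lipschitz_on UNIV G"
  obtains v where "v 0 = x\<^sub>0" "\<And>t. t \<le> 0 \<Longrightarrow> (v has_vector_derivative G (v t)) (at t within {..0})"
proof -
  obtain u where u0: "u 0 = x\<^sub>0"
    and u: "\<And>t. 0 \<le> t \<Longrightarrow> (u has_vector_derivative - G (u t)) (at t within {0..})"
    using lipschitz_ode_forward_solution[OF lipschitz_on_minus[OF lip], where x\<^sub>0 = x\<^sub>0] by blast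
  have "((\<lambda>s. u (- s)) has_vector_derivative G (u (- t))) (at t within {..0})" if "t \<le> 0" for t
  proof -
    have neg: "(uminus has_vector_derivative -1) (at t within {..0})"
      by (rule derivative_eq_intros refl)+
    have "(u has_vector_derivative - G (u (- t))) (at (- t) within uminus ` {..0})"
      using u[of "- t"] that by simp
    from vector_diff_chain_within[OF neg this] show ?thesis
      by (simp add: o_def)
  qed
  then show ?thesis using that[of "\<lambda>s. u (- s)"] u0 by simp
qed

lemma lipschitz_ode_global_solution:
  fixes G :: "'v::banach \<Rightarrow> 'v"
  assumes lip: "L-lipschitz_on UNIV G"
  obtains w where "w 0 = x\<^sub>0" "\<And>t. (w has_vector_derivative G (w t)) (at t)"
proof -
  obtain u where u0: "u 0 = x\<^sub>0"
    and u: "\<And>t. 0 \<le> t \<Longrightarrow> (u has_vector_derivative G (u t)) (at t within {0..})"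
    using lipschitz_ode_forward_solution[OF lip, where x\<^sub>0 = x\<^sub>0] by blast
  obtain v where v0: "v 0 = x\<^sub>0"
    and v: "\<And>t. t \<le> 0 \<Longrightarrow> (v has_vector_derivative G (v t)) (at t within {..0})"
    using lipschitz_ode_backward_solution[OF lip, where x\<^sub>0 = x\<^sub>0] by blast
  define w where "w t = (if t \<in> {0..} then u t else v t)" for t
  have closures: "{0::real..} \<union> (closure {0..} \<inter> closure {..<0}) = {0..}"
    "{..<0::real} \<union> (closure {0..} \<inter> closure {..<0}) = {..0}"
    by auto
  have "(w has_vector_derivative (if t \<in> {0..} then G (u t) else G (v t))) (at t within UNIV)" for t
    unfolding w_def
  proof (rule has_vector_derivative_If_within_closures[where f' = "\<lambda>s. G (u s)" and g' = "\<lambda>s. G (v s)"])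
    show "t \<in> {0..} \<union> {..<0}" "UNIV = {0::real..} \<union> {..<0}" by auto
    show "(u has_vector_derivative G (u t)) (at t within {0..} \<union> (closure {0..} \<inter> closure {..<0}))"
      if "t \<in> {0..} \<union> (closure {0..} \<inter> closure {..<0})"
      using that u unfolding closures by simp
    show "(v has_vector_derivative G (v t)) (at t within {..<0} \<union> (closure {0..} \<inter> closure {..<0}))"
      if "t \<in> {..<0} \<union> (closure {0..} \<inter> closure {..<0})"
      using that v unfolding closures by simp
    show "u t = v t" "G (u t) = G (v t)" if "t \<in> closure {0..}" "t \<in> closure {..<0}"
      using that u0 v0 by auto
  qed
  moreover have "G (w t) = (if t \<in> {0..} then G (u t) else G (v t))" for t by (simp add: w_def)
  ultimately show ?thesis using that[of w] u0 by (simp add: w_def)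
qed

section \<open>Maps that are Lipschitz on bounded sets\<close>

lemma lipschitz_on_mult:
  fixes f g :: "'a::metric_space \<Rightarrow> 'b::real_normed_algebra"
  assumes f: "L-lipschitz_on S f" and g: "M-lipschitz_on S g"
    and f_bound: "\<And>x. x \<in> S \<Longrightarrow> norm (f x) \<le> A" and g_bound: "\<And>x. x \<in> S \<Longrightarrow> norm (g x) \<le> B"
    and A: "0 \<le> A" and B: "0 \<le> B"
  shows "(A * M + B * L)-lipschitz_on S (\<lambda>x. f x * g x)"
proof (rule lipschitz_onI)
  fix x y assume xy: "x \<in> S" "y \<in> S"
  have "dist (f x * g x) (f y * g y) = norm (f x * (g x - g y) + (f x - f y) * g y)"
    by (simp add: dist_norm algebra_simps)
  also have "\<dots> \<le> norm (f x) * norm (g x - g y) + norm (f x - f y) * norm (g y)"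
    by (intro order_trans[OF norm_triangle_ineq] add_mono norm_mult_ineq)
  also have "\<dots> \<le> A * (M * dist x y) + (L * dist x y) * B"
    using xy f_bound g_bound lipschitz_onD[OF f xy] lipschitz_onD[OF g xy] A lipschitz_on_nonneg[OF f]
    by (intro add_mono mult_mono) (auto simp: dist_norm)
  finally show "dist (f x * g x) (f y * g y) \<le> (A * M + B * L) * dist x y"
    by (simp add: algebra_simps)
qed (use assms lipschitz_on_nonneg[OF f] lipschitz_on_nonneg[OF g] in simp)

definition lipschitz_on_bounded :: "('a::real_normed_vector \<Rightarrow> 'b::real_normed_vector) \<Rightarrow> bool" where
  "lipschitz_on_bounded g \<longleftrightarrow> (\<forall>R. \<exists>L. L-lipschitz_on (cball 0 R) g)"

lemma lipschitz_on_boundedE: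
  assumes "lipschitz_on_bounded g"
  obtains L B where "L-lipschitz_on (cball 0 R) g" "\<And>u. u \<in> cball 0 R \<Longrightarrow> norm (g u) \<le> B" "0 \<le> B"
proof -
  obtain L where L: "L-lipschitz_on (cball 0 R) g"
    using assms unfolding lipschitz_on_bounded_def by blast
  have "norm (g u) \<le> norm (g 0) + L * \<bar>R\<bar>" if u: "u \<in> cball 0 R" for u
  proof -
    have "norm (g u) \<le> norm (g 0) + norm (g u - g 0)" by (rule norm_triangle_sub)
    also have "norm (g u - g 0) \<le> L * norm u"
    proof -
      have "0 \<in> cball 0 R" using u by (simp add: mem_cball_0) (meson norm_ge_zero order_trans)
      from lipschitz_on_normD[OF L u this] show ?thesis by simp
    qed
    also have "\<dots> \<le> L * \<bar>R\<bar>"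
      using u lipschitz_on_nonneg[OF L] by (intro mult_left_mono) auto
    finally show ?thesis by simp
  qed
  then show ?thesis using that[OF L, of "norm (g 0) + L * \<bar>R\<bar>"] lipschitz_on_nonneg[OF L] by simp
qed

lemma lipschitz_on_bounded_const: "lipschitz_on_bounded (\<lambda>u. c)"
  unfolding lipschitz_on_bounded_def by (blast intro: lipschitz_on_constant)

lemma lipschitz_on_bounded_add:
  "lipschitz_on_bounded f \<Longrightarrow> lipschitz_on_bounded g \<Longrightarrow> lipschitz_on_bounded (\<lambda>u. f u + g u)"
  unfolding lipschitz_on_bounded_def by (blast intro: lipschitz_on_add)

lemma lipschitz_on_bounded_minus:
  "lipschitz_on_bounded f \<Longrightarrow> lipschitz_on_bounded (\<lambda>u. - f u)"
  unfolding lipschitz_on_bounded_def by simp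

lemma lipschitz_on_bounded_diff:
  "lipschitz_on_bounded f \<Longrightarrow> lipschitz_on_bounded g \<Longrightarrow> lipschitz_on_bounded (\<lambda>u. f u - g u)"
  unfolding lipschitz_on_bounded_def by (blast intro: lipschitz_on_diff)

lemma lipschitz_on_bounded_mult:
  fixes f g :: "'a::real_normed_vector \<Rightarrow> 'b::real_normed_algebra"
  assumes "lipschitz_on_bounded f" "lipschitz_on_bounded g"
  shows "lipschitz_on_bounded (\<lambda>u. f u * g u)"
  unfolding lipschitz_on_bounded_def
proof
  fix R
  obtain L A where "L-lipschitz_on (cball 0 R) f" "\<And>u. u \<in> cball 0 R \<Longrightarrow> norm (f u) \<le> A" "0 \<le> A"
    using lipschitz_on_boundedE[OF assms(1), where R = R] by blast
  moreover obtain M B where "M-lipschitz_on (cball 0 R) g" "\<And>u. u \<in> cball 0 R \<Longrightarrow> norm (g u) \<le> B" "0 \<le> B"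
    using lipschitz_on_boundedE[OF assms(2), where R = R] by blast
  ultimately show "\<exists>K. K-lipschitz_on (cball 0 R) (\<lambda>u. f u * g u)"
    by (blast intro: lipschitz_on_mult)
qed

lemma lipschitz_on_bounded_divide_const:
  fixes f :: "'a::real_normed_vector \<Rightarrow> 'b::real_normed_field"
  shows "lipschitz_on_bounded f \<Longrightarrow> lipschitz_on_bounded (\<lambda>u. f u / c)"
  using lipschitz_on_bounded_mult[OF _ lipschitz_on_bounded_const[of "inverse c"]]
  by (simp add: field_class.field_divide_inverse)

lemma lipschitz_on_bounded_if:
  "lipschitz_on_bounded f \<Longrightarrow> lipschitz_on_bounded g \<Longrightarrow> lipschitz_on_bounded (\<lambda>u. if b then f u else g u)"
  by (cases b) simp_all

lemma lipschitz_on_bounded_linear_compose: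
  assumes "lipschitz_on_bounded f" "bounded_linear h"
  shows "lipschitz_on_bounded (\<lambda>u. h (f u))"
  unfolding lipschitz_on_bounded_def
proof
  fix R
  obtain L where "L-lipschitz_on (cball 0 R) f"
    using assms(1) unfolding lipschitz_on_bounded_def by blast
  moreover obtain K where "K-lipschitz_on (f ` cball 0 R) h"
    using bounded_linear.lipschitz_boundE[OF assms(2)] .
  ultimately show "\<exists>K. K-lipschitz_on (cball 0 R) (\<lambda>u. h (f u))"
    by (blast intro: lipschitz_on_compose2)
qed

lemma lipschitz_on_bounded_bounded_linear: "bounded_linear h \<Longrightarrow> lipschitz_on_bounded h"
  using lipschitz_on_bounded_linear_compose[of "\<lambda>u. u"]
  unfolding lipschitz_on_bounded_def by (blast intro: lipschitz_on_id)

lemma lipschitz_on_bounded_Pair: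
  "lipschitz_on_bounded f \<Longrightarrow> lipschitz_on_bounded g \<Longrightarrow> lipschitz_on_bounded (\<lambda>u. (f u, g u))"
  unfolding lipschitz_on_bounded_def by (blast intro: lipschitz_on_Pair)

definition radial_cutoff :: "real \<Rightarrow> 'v::real_normed_vector \<Rightarrow> real" where
  "radial_cutoff R u = max 0 (min 1 (2 - norm u / R))"

lemma radial_cutoff_eq_1: "0 < R \<Longrightarrow> norm u \<le> R \<Longrightarrow> radial_cutoff R u = 1"
  by (auto simp: radial_cutoff_def field_simps)

lemma radial_cutoff_eq_0: "0 < R \<Longrightarrow> 2 * R \<le> norm u \<Longrightarrow> radial_cutoff R u = 0"
  by (auto simp: radial_cutoff_def field_simps)

lemma abs_radial_cutoff_le_1: "\<bar>radial_cutoff R u\<bar> \<le> 1"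
  by (auto simp: radial_cutoff_def)

lemma radial_cutoff_lipschitz:
  assumes "0 < R"
  shows "\<bar>radial_cutoff R u - radial_cutoff R v\<bar> \<le> norm (u - v) / R"
proof -
  have "\<bar>radial_cutoff R u - radial_cutoff R v\<bar> \<le> \<bar>norm v - norm u\<bar> / R"
    using assms by (auto simp: radial_cutoff_def max_def min_def abs_if field_simps)
  also have "\<dots> \<le> norm (u - v) / R"
    using assms norm_triangle_ineq3[of v u] by (simp add: norm_minus_commute divide_right_mono)
  finally show ?thesis .
qed

lemma norm_cutoff_field_diff_le:
  fixes G :: "'v::real_normed_vector \<Rightarrow> 'w::real_normed_vector"
  assumes R: "0 < R" and G: "L-lipschitz_on (cball 0 (2 * R)) G"
    and G_bound: "\<And>u. u \<in> cball 0 (2 * R) \<Longrightarrow> norm (G u) \<le> B" and u: "norm u \<le> 2 * R"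
  shows "norm (radial_cutoff R u *\<^sub>R G u - radial_cutoff R v *\<^sub>R G v) \<le> (L + B / R) * norm (u - v)"
proof (cases "norm v \<le> 2 * R")
  case True
  have "radial_cutoff R u *\<^sub>R G u - radial_cutoff R v *\<^sub>R G v
      = radial_cutoff R u *\<^sub>R (G u - G v) + (radial_cutoff R u - radial_cutoff R v) *\<^sub>R G v"
    by (simp add: algebra_simps)
  then have "norm (radial_cutoff R u *\<^sub>R G u - radial_cutoff R v *\<^sub>R G v)
      \<le> \<bar>radial_cutoff R u\<bar> * norm (G u - G v) + \<bar>radial_cutoff R u - radial_cutoff R v\<bar> * norm (G v)"
    by (metis norm_scaleR norm_triangle_ineq)
  also have "\<dots> \<le> 1 * (L * norm (u - v)) + (norm (u - v) / R) * B"
    using u True lipschitz_on_normD[OF G, of u v] G_bound[of v] abs_radial_cutoff_le_1[of R u]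
      radial_cutoff_lipschitz[OF R, of u v]
    by (intro add_mono mult_mono) auto
  finally show ?thesis by (simp add: algebra_simps)
next
  case False
  then have "radial_cutoff R v = 0" by (intro radial_cutoff_eq_0[OF R]) simp
  then have "norm (radial_cutoff R u *\<^sub>R G u - radial_cutoff R v *\<^sub>R G v)
      = \<bar>radial_cutoff R u - radial_cutoff R v\<bar> * norm (G u)" by simp
  also have "\<dots> \<le> (norm (u - v) / R) * B"
    using u G_bound[of u] radial_cutoff_lipschitz[OF R, of u v] by (intro mult_mono) auto
  also have "\<dots> \<le> (L + B / R) * norm (u - v)" using lipschitz_on_nonneg[OF G] by (simp add: algebra_simps)
  finally show ?thesis .
qed

lemma lipschitz_on_cutoff_field:
  fixes G :: "'v::real_normed_vector \<Rightarrow> 'w::real_normed_vector"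
  assumes R: "0 < R" and G: "L-lipschitz_on (cball 0 (2 * R)) G"
    and G_bound: "\<And>u. u \<in> cball 0 (2 * R) \<Longrightarrow> norm (G u) \<le> B"
  shows "(L + B / R)-lipschitz_on UNIV (\<lambda>u. radial_cutoff R u *\<^sub>R G u)"
proof (rule lipschitz_onI)
  have B: "0 \<le> B" using G_bound[of 0] R by (auto intro: order_trans[OF norm_ge_zero])
  then show "0 \<le> L + B / R" using lipschitz_on_nonneg[OF G] R by simp
  fix u v :: 'v
  note inside = norm_cutoff_field_diff_le[OF R G G_bound]
  consider "norm u \<le> 2 * R" | "norm v \<le> 2 * R" | "2 * R \<le> norm u" "2 * R \<le> norm v" by linarith
  then show "dist (radial_cutoff R u *\<^sub>R G u) (radial_cutoff R v *\<^sub>R G v) \<le> (L + B / R) * dist u v"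
  proof cases
    case 1
    then show ?thesis using inside[of u v] by (simp add: dist_norm)
  next
    case 2
    then show ?thesis using inside[of v u] by (simp add: dist_norm norm_minus_commute)
  next
    case 3
    then show ?thesis using \<open>0 \<le> L + B / R\<close> R by (simp add: radial_cutoff_eq_0)
  qed
qed

section \<open>The state space\<close>

text \<open>A state stores the real coefficients \<open>f\<^sub>0, \<dots>, f\<^sub>n\<close> and the complex \<open>\<psi>\<^sub>0, \<dots>, \<psi>\<^sub>n\<close> as
  bounded functions on the discrete space of indices; entries beyond \<open>n\<close> are unused and stay \<open>0\<close>.
  The constant \<open>f\<^sub>n\<^sub>+\<^sub>1\<close> enters as a parameter \<open>c\<close>, and \<open>\<phi> = - cnj \<psi>\<close> is not stored.\<close>

type_synonym state = "(nat discrete \<Rightarrow>\<^sub>C real) \<times> (nat discrete \<Rightarrow>\<^sub>C complex)"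

instance bcontfun :: (metric_space, banach) banach ..

definition bcf_nth :: "('a discrete \<Rightarrow>\<^sub>C 'b::metric_space) \<Rightarrow> 'a \<Rightarrow> 'b" where
  "bcf_nth g j = apply_bcontfun g (discrete j)"

definition bcf_of_seq :: "nat \<Rightarrow> (nat \<Rightarrow> 'b::real_normed_vector) \<Rightarrow> nat discrete \<Rightarrow>\<^sub>C 'b" where
  "bcf_of_seq n g = Bcontfun (\<lambda>i. if of_discrete i \<le> n then g (of_discrete i) else 0)"

lemma continuous_on_discrete_domain: "continuous_on S (f :: 'a discrete \<Rightarrow> 'b::topological_space)"
  unfolding continuous_on_open_invariant using open_discrete by blast

lemma bcf_nth_bcf_of_seq [simp]: "bcf_nth (bcf_of_seq n g) j = (if j \<le> n then g j else 0)"
proof -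
  have "(\<lambda>i. if of_discrete i \<le> n then g (of_discrete i) else 0) \<in> bcontfun"
  proof (rule bcontfun_normI[OF continuous_on_discrete_domain])
    fix i :: "nat discrete"
    show "norm (if of_discrete i \<le> n then g (of_discrete i) else 0) \<le> (\<Sum>k\<le>n. norm (g k))"
      using member_le_sum[of "of_discrete i" "{..n}" "\<lambda>k. norm (g k)"] by (auto intro: sum_nonneg)
  qed
  then show ?thesis by (simp add: bcf_nth_def bcf_of_seq_def Bcontfun_inverse discrete_inverse)
qed

lemma bounded_linear_bcf_nth: "bounded_linear (\<lambda>g. bcf_nth g j)"
  unfolding bcf_nth_def by (rule bounded_linear_intro[where K = 1]) (auto simp: norm_bounded)

lemma norm_bcf_le:
  assumes "\<And>j. norm (bcf_nth g j) \<le> B"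
  shows "norm g \<le> B"
proof (rule norm_bound)
  fix i show "norm (apply_bcontfun g i) \<le> B"
    using assms[of "of_discrete i"] by (simp add: bcf_nth_def of_discrete_inverse)
qed

lemma norm_bcf_of_seq_le: "norm (bcf_of_seq n g) \<le> (\<Sum>j\<le>n. norm (g j))"
  by (rule norm_bcf_le) (auto intro: member_le_sum sum_nonneg)

lemma bcf_eqI: "(\<And>j. bcf_nth f j = bcf_nth g j) \<Longrightarrow> f = g"
  by (rule bcontfun_eqI) (metis bcf_nth_def of_discrete_inverse)

lemma bcf_nth_diff [simp]: "bcf_nth (f - g) j = bcf_nth f j - bcf_nth g j"
  by (simp add: bcf_nth_def minus_bcontfun.rep_eq)

lemma bcf_nth_scaleR [simp]: "bcf_nth (a *\<^sub>R g) j = a *\<^sub>R bcf_nth g j"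
  by (simp add: bcf_nth_def scaleR_bcontfun.rep_eq)

lemma bcf_of_seq_diff: "bcf_of_seq n g - bcf_of_seq n h = bcf_of_seq n (\<lambda>j. g j - h j)"
  by (rule bcf_eqI) simp

lemma lipschitz_on_bounded_bcf_of_seq:
  fixes h :: "'a::real_normed_vector \<Rightarrow> nat \<Rightarrow> 'b::real_normed_vector"
  assumes "\<And>j. j \<le> n \<Longrightarrow> lipschitz_on_bounded (\<lambda>u. h u j)"
  shows "lipschitz_on_bounded (\<lambda>u. bcf_of_seq n (h u))"
  unfolding lipschitz_on_bounded_def
proof
  fix R
  have "\<forall>j\<in>{..n}. \<exists>L. L-lipschitz_on (cball 0 R) (\<lambda>u. h u j)"
    using assms unfolding lipschitz_on_bounded_def by blast
  then obtain L where L: "\<And>j. j \<le> n \<Longrightarrow> (L j)-lipschitz_on (cball 0 R) (\<lambda>u. h u j)"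
    by (metis atMost_iff bchoice)
  have "(\<Sum>j\<le>n. L j)-lipschitz_on (cball 0 R) (\<lambda>u. bcf_of_seq n (h u))"
  proof (rule lipschitz_onI)
    fix u v :: 'a assume uv: "u \<in> cball 0 R" "v \<in> cball 0 R"
    have "dist (bcf_of_seq n (h u)) (bcf_of_seq n (h v)) \<le> (\<Sum>j\<le>n. norm (h u j - h v j))"
      unfolding dist_norm bcf_of_seq_diff by (rule norm_bcf_of_seq_le)
    also have "\<dots> \<le> (\<Sum>j\<le>n. L j * dist u v)"
      using lipschitz_onD[OF L uv] by (intro sum_mono) (simp add: dist_norm)
    finally show "dist (bcf_of_seq n (h u)) (bcf_of_seq n (h v)) \<le> (\<Sum>j\<le>n. L j) * dist u v"
      by (simp add: sum_distrib_right)
  qed (auto intro!: sum_nonneg lipschitz_on_nonneg[OF L])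
  then show "\<exists>L. L-lipschitz_on (cball 0 R) (\<lambda>u. bcf_of_seq n (h u))" ..
qed

lemma has_vector_derivative_bcf_nth:
  fixes g :: "real \<Rightarrow> 'a discrete \<Rightarrow>\<^sub>C 'b::real_normed_vector"
  shows "(g has_vector_derivative g') F \<Longrightarrow> ((\<lambda>t. bcf_nth (g t) j) has_vector_derivative bcf_nth g' j) F"
  by (rule bounded_linear.has_vector_derivative[OF bounded_linear_bcf_nth])

section \<open>Polynomials given by coefficient sequences\<close>

lemma poly_synthetic_div_eq:
  fixes p :: "'a::comm_ring_1 poly"
  shows "poly p x = (x - c) * poly (synthetic_div p c) x + poly p c"
proof -
  have "poly ([:-c, 1:] * synthetic_div p c + [:poly p c:]) x = poly p x"
    by (simp only: synthetic_div_correct')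
  then show ?thesis by (simp add: algebra_simps)
qed

lemma coeff_synthetic_div_eq:
  fixes p :: "'a::comm_ring_1 poly"
  shows "coeff p j = - c * coeff (synthetic_div p c) j + (if j = 0 then poly p c else coeff (synthetic_div p c) (j - 1))"
  using arg_cong[OF synthetic_div_correct'[of c p], of "\<lambda>r. coeff r j"]
  by (cases j) (simp_all add: coeff_pCons' algebra_simps)

lemma norm_poly_synthetic_div_le:
  fixes p :: "'a::real_normed_field poly"
  shows "norm (poly (synthetic_div p (of_nat s)) (of_nat (Suc s + k)))
           \<le> norm (poly p (of_nat (s + Suc k))) + norm (poly p (of_nat s))"
proof -
  let ?q = "poly (synthetic_div p (of_nat s)) (of_nat (Suc s + k))"
  have "of_nat (Suc k) * ?q = poly p (of_nat (s + Suc k)) - poly p (of_nat s)"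
    using poly_synthetic_div_eq[of p "of_nat (s + Suc k)" "of_nat s"] by (simp add: algebra_simps)
  then have "real (Suc k) * norm ?q \<le> norm (poly p (of_nat (s + Suc k))) + norm (poly p (of_nat s))"
    by (metis norm_mult norm_of_nat norm_triangle_ineq4)
  moreover have "norm ?q \<le> real (Suc k) * norm ?q"
    using mult_right_mono[of 1 "real (Suc k)" "norm ?q"] by simp
  ultimately show ?thesis by linarith
qed

lemma poly_coeff_bound_by_values:
  "\<exists>K. \<forall>(p :: 'a::real_normed_field poly) M. degree p \<le> N \<longrightarrow>
      (\<forall>k\<le>N. norm (poly p (of_nat (s + k))) \<le> M) \<longrightarrow> (\<forall>j. norm (coeff p j) \<le> K * M)"
proof (induction N arbitrary: s)
  case 0
  have "norm (coeff p j) \<le> M" if deg: "degree p = 0" and val: "norm (poly p (of_nat s)) \<le> M"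
    for p :: "'a poly" and M j
  proof -
    obtain c where "p = [:c:]" using degree_eq_zeroE[OF deg] .
    then show ?thesis using val by (cases j) (auto intro: order_trans[OF norm_ge_zero])
  qed
  then show ?case by (intro exI[of _ 1]) auto
next
  case (Suc N)
  obtain K where K: "\<And>(q :: 'a poly) M. degree q \<le> N \<Longrightarrow> (\<forall>k\<le>N. norm (poly q (of_nat (Suc s + k))) \<le> M)
      \<Longrightarrow> \<forall>j. norm (coeff q j) \<le> K * M"
    using Suc.IH[of "Suc s"] by blast
  have "norm (coeff p j) \<le> ((real s + 1) * (2 * K) + 1) * M"
    if p: "degree p \<le> Suc N" and val: "\<forall>k\<le>Suc N. norm (poly p (of_nat (s + k))) \<le> M"
    for p :: "'a poly" and M j
  proof -
    define c :: 'a where "c = of_nat s"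
    define q where "q = synthetic_div p c"
    have pc: "norm (poly p c) \<le> M" using val[rule_format, of 0] by (simp add: c_def)
    have "norm (poly q (of_nat (Suc s + k))) \<le> 2 * M" if "k \<le> N" for k
      using norm_poly_synthetic_div_le[of p s k] val[rule_format, of "Suc k"] that pc
      by (simp add: q_def c_def)
    then have q: "norm (coeff q i) \<le> K * (2 * M)" for i
      using K[of q "2 * M"] p by (simp add: q_def degree_synthetic_div)
    have "norm (- c * coeff q j) \<le> real s * (K * (2 * M))"
      using q[of j] by (simp add: norm_mult c_def mult_left_mono)
    moreover have "norm (if j = 0 then poly p c else coeff q (j - 1)) \<le> K * (2 * M) + M"
      using q[of "j - 1"] pc order_trans[OF norm_ge_zero q[of 0]] order_trans[OF norm_ge_zero pc] by auto
    ultimately have "norm (coeff p j) \<le> real s * (K * (2 * M)) + (K * (2 * M) + M)"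
      unfolding coeff_synthetic_div_eq[of p j c] q_def[symmetric]
      by (intro order_trans[OF norm_triangle_ineq] add_mono)
    then show ?thesis by (simp add: algebra_simps)
  qed
  then show ?case by blast
qed

definition seq_poly :: "nat \<Rightarrow> (nat \<Rightarrow> 'a::comm_semiring_1) \<Rightarrow> 'a \<Rightarrow> 'a" where
  "seq_poly m g X = (\<Sum>j\<le>m. g j * X ^ j)"

lemma seq_poly_Suc: "seq_poly (Suc m) g X = seq_poly m g X + g (Suc m) * X ^ Suc m"
  by (simp add: seq_poly_def)

lemma seq_poly_cong: "(\<And>l. l \<le> m \<Longrightarrow> g l = h l) \<Longrightarrow> seq_poly m g X = seq_poly m h X"
  unfolding seq_poly_def by (rule sum.cong) auto

lemma seq_poly_add: "seq_poly m (\<lambda>j. g j + h j) X = seq_poly m g X + seq_poly m h X"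
  by (simp add: seq_poly_def sum.distrib algebra_simps)

lemma seq_poly_diff:
  fixes g h :: "nat \<Rightarrow> 'a::comm_ring_1"
  shows "seq_poly m (\<lambda>j. g j - h j) X = seq_poly m g X - seq_poly m h X"
  by (simp add: seq_poly_def sum_subtractf left_diff_distrib)

lemma seq_poly_cmult: "seq_poly m (\<lambda>j. a * g j) X = a * seq_poly m g X"
  by (simp add: seq_poly_def sum_distrib_left mult.assoc)

lemma cnj_seq_poly: "cnj (seq_poly m g X) = seq_poly m (\<lambda>j. cnj (g j)) (cnj X)"
  by (simp add: seq_poly_def cnj_sum)

lemma has_vector_derivative_seq_poly:
  fixes g :: "real \<Rightarrow> nat \<Rightarrow> 'a::real_normed_field"
  assumes "\<And>j. j \<le> m \<Longrightarrow> ((\<lambda>t. g t j) has_vector_derivative g' j) F"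
  shows "((\<lambda>t. seq_poly m (g t) X) has_vector_derivative seq_poly m g' X) F"
  unfolding seq_poly_def using assms by (intro has_vector_derivative_sum has_vector_derivative_mult_left) auto

lemma seq_poly_coeff_bound:
  "\<exists>K. \<forall>(g :: nat \<Rightarrow> 'a::real_normed_field) M.
      (\<forall>k\<le>m. norm (seq_poly m g (of_nat k)) \<le> M) \<longrightarrow> (\<forall>j\<le>m. norm (g j) \<le> K * M)"
proof -
  obtain K where K: "\<forall>(p :: 'a poly) M. degree p \<le> m \<longrightarrow> (\<forall>k\<le>m. norm (poly p (of_nat k)) \<le> M)
      \<longrightarrow> (\<forall>j. norm (coeff p j) \<le> K * M)"
    using poly_coeff_bound_by_values[of m 0] by auto
  have "norm (g j) \<le> K * M" if val: "\<forall>k\<le>m. norm (seq_poly m g (of_nat k)) \<le> M" and "j \<le> m"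
    for g :: "nat \<Rightarrow> 'a" and M j
  proof -
    define p where "p = (\<Sum>i\<le>m. monom (g i) i)"
    have "poly p X = seq_poly m g X" for X
      by (simp add: p_def seq_poly_def poly_sum poly_monom)
    with val have "\<forall>k\<le>m. norm (poly p (of_nat k)) \<le> M" by simp
    moreover have "degree p \<le> m"
      unfolding p_def by (intro degree_sum_le) (auto intro: order_trans[OF degree_monom_le])
    ultimately have "norm (coeff p j) \<le> K * M" using K by blast
    moreover have "coeff p j = g j" using \<open>j \<le> m\<close> by (simp add: p_def coeff_sum coeff_monom)
    ultimately show ?thesis by simp
  qed
  then show ?thesis by blast
qed

section \<open>Symmetric data, the energy and the reduced flow\<close>

lemma has_vector_derivative_zero_imp_eq:
  fixes f :: "real \<Rightarrow> 'a::real_normed_vector"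
  assumes "\<And>t. (f has_vector_derivative 0) (at t)"
  shows "f t = f s"
  using has_vector_derivative_zero_constant[of UNIV f] assms by (metis UNIV_I convex_UNIV)

lemma of_real_Re_cnj_fixed: "cnj z = z \<Longrightarrow> of_real (Re z) = z"
  by (simp add: Reals_cnj_iff[symmetric])

definition symmetric_data :: "(nat \<Rightarrow> complex) \<Rightarrow> (nat \<Rightarrow> complex) \<Rightarrow> (nat \<Rightarrow> complex) \<Rightarrow> bool" where
  "symmetric_data f p q \<longleftrightarrow> (\<forall>j. cnj (f j) = f j) \<and> (\<forall>l. q l = - cnj (p l))"

definition energy :: "nat \<Rightarrow> (nat \<Rightarrow> complex) \<Rightarrow> (nat \<Rightarrow> complex) \<Rightarrow> (nat \<Rightarrow> complex) \<Rightarrow> complex \<Rightarrow> complex" where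
  "energy n f p q X = (seq_poly (Suc n) f X)\<^sup>2 - seq_poly n p X * seq_poly n q X"

lemma abs_le_1_plus_square: "0 \<le> b \<Longrightarrow> \<bar>a\<bar> \<le> 1 + a\<^sup>2 + b" for a b :: real
  using sum_power2_ge_zero[of "\<bar>a\<bar> - 1" 0] by (simp add: power2_diff power2_abs)

lemma norm_seq_poly_le_energy:
  assumes "symmetric_data f p q"
  shows "norm (seq_poly (Suc n) f (of_real x)) \<le> 1 + norm (energy n f p q (of_real x))"
    and "norm (seq_poly n p (of_real x)) \<le> 1 + norm (energy n f p q (of_real x))"
proof -
  define F where "F = seq_poly (Suc n) f (of_real x)"
  define P where "P = seq_poly n p (of_real x)"
  have "cnj F = F" using assms by (simp add: F_def cnj_seq_poly symmetric_data_def)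
  then have F_real: "F = of_real (Re F)" by (simp only: of_real_Re_cnj_fixed)
  have "seq_poly n q (of_real x) = - cnj P"
    using assms by (simp add: P_def cnj_seq_poly symmetric_data_def seq_poly_def sum_negf)
  moreover have "P * cnj P = of_real ((norm P)\<^sup>2)" using complex_norm_square[of P] by simp
  ultimately have "energy n f p q (of_real x) = of_real ((Re F)\<^sup>2 + (norm P)\<^sup>2)"
    unfolding energy_def F_def[symmetric] P_def[symmetric] by (subst F_real) simp
  then have energy_norm: "norm (energy n f p q (of_real x)) = (Re F)\<^sup>2 + (norm P)\<^sup>2"
    by (simp only: norm_of_real) simp
  have "norm F = \<bar>Re F\<bar>" by (subst F_real) (simp only: norm_of_real)
  then show "norm F \<le> 1 + norm (energy n f p q (of_real x))"
    unfolding energy_norm using abs_le_1_plus_square[of "(norm P)\<^sup>2" "Re F"] by simp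
  show "norm P \<le> 1 + norm (energy n f p q (of_real x))"
    unfolding energy_norm using abs_le_1_plus_square[of "(Re F)\<^sup>2" "norm P"] by simp
qed

definition state_f :: "nat \<Rightarrow> real \<Rightarrow> state \<Rightarrow> nat \<Rightarrow> complex" where
  "state_f n c u j = (if j \<le> n then of_real (bcf_nth (fst u) j) else if j = Suc n then of_real c else 0)"

definition state_psi :: "nat \<Rightarrow> state \<Rightarrow> nat \<Rightarrow> complex" where
  "state_psi n u l = (if l \<le> n then bcf_nth (snd u) l else 0)"

definition state_phi :: "nat \<Rightarrow> state \<Rightarrow> nat \<Rightarrow> complex" where
  "state_phi n u l = - cnj (state_psi n u l)"

definition vanishes_beyond :: "nat \<Rightarrow> state \<Rightarrow> bool" where
  "vanishes_beyond n u \<longleftrightarrow> (\<forall>j>n. bcf_nth (fst u) j = 0 \<and> bcf_nth (snd u) j = 0)"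

lemma state_f_Suc [simp]: "state_f n c u (Suc n) = of_real c"
  by (simp add: state_f_def)

lemma symmetric_data_state: "symmetric_data (state_f n c u) (state_psi n u) (state_phi n u)"
  by (simp add: symmetric_data_def state_f_def state_phi_def)

lemma lipschitz_on_bounded_state_f: "lipschitz_on_bounded (\<lambda>u. state_f n c u j)"
  unfolding state_f_def
  by (intro lipschitz_on_bounded_if lipschitz_on_bounded_const lipschitz_on_bounded_bounded_linear
      bounded_linear_compose[OF bounded_linear_of_real] bounded_linear_compose[OF bounded_linear_bcf_nth]
      bounded_linear_fst)

lemma lipschitz_on_bounded_state_psi: "lipschitz_on_bounded (\<lambda>u. state_psi n u l)"
  unfolding state_psi_def
  by (intro lipschitz_on_bounded_if lipschitz_on_bounded_const lipschitz_on_bounded_bounded_linear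
      bounded_linear_compose[OF bounded_linear_bcf_nth] bounded_linear_snd)

lemma lipschitz_on_bounded_state_phi: "lipschitz_on_bounded (\<lambda>u. state_phi n u l)"
  unfolding state_phi_def
  by (intro lipschitz_on_bounded_minus lipschitz_on_bounded_linear_compose[OF _ bounded_linear_cnj]
      lipschitz_on_bounded_state_psi)

lemmas lipschitz_on_bounded_intros =
  lipschitz_on_bounded_add lipschitz_on_bounded_diff lipschitz_on_bounded_mult lipschitz_on_bounded_minus
  lipschitz_on_bounded_divide_const lipschitz_on_bounded_if lipschitz_on_bounded_const
  lipschitz_on_bounded_state_f lipschitz_on_bounded_state_psi lipschitz_on_bounded_state_phi

lemma norm_state_le:
  assumes "vanishes_beyond n u"
    and f: "\<And>j. j \<le> n \<Longrightarrow> norm (state_f n c u j) \<le> A" and psi: "\<And>l. l \<le> n \<Longrightarrow> norm (state_psi n u l) \<le> B"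
    and "0 \<le> A" "0 \<le> B"
  shows "norm u \<le> A + B"
proof -
  have "norm (fst u) \<le> A"
  proof (rule norm_bcf_le)
    fix j show "norm (bcf_nth (fst u) j) \<le> A"
      using f[of j] assms(1,4) by (cases "j \<le> n") (auto simp: vanishes_beyond_def state_f_def)
  qed
  moreover have "norm (snd u) \<le> B"
  proof (rule norm_bcf_le)
    fix l show "norm (bcf_nth (snd u) l) \<le> B"
      using psi[of l] assms(1,5) by (cases "l \<le> n") (auto simp: vanishes_beyond_def state_psi_def)
  qed
  ultimately show ?thesis using norm_Pair_le[of "fst u" "snd u"] by simp
qed

lemma bounded_energy_levels:
  "\<exists>B. \<forall>u. vanishes_beyond n u \<longrightarrow>
      (\<forall>k\<le>Suc n. energy n (state_f n c u) (state_psi n u) (state_phi n u) (of_nat k) = E k) \<longrightarrow> norm u \<le> B"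
proof -
  define M where "M = 1 + (\<Sum>k\<le>Suc n. norm (E k))"
  obtain K1 where K1: "\<And>(g :: nat \<Rightarrow> complex) M. \<forall>k\<le>Suc n. norm (seq_poly (Suc n) g (of_nat k)) \<le> M
      \<Longrightarrow> \<forall>j\<le>Suc n. norm (g j) \<le> K1 * M"
    using seq_poly_coeff_bound[of "Suc n"] by blast
  obtain K2 where K2: "\<And>(g :: nat \<Rightarrow> complex) M. \<forall>k\<le>n. norm (seq_poly n g (of_nat k)) \<le> M
      \<Longrightarrow> \<forall>j\<le>n. norm (g j) \<le> K2 * M"
    using seq_poly_coeff_bound[of n] by blast
  have "norm u \<le> K1 * M + K2 * M"
    if u: "vanishes_beyond n u"
      and levels: "\<forall>k\<le>Suc n. energy n (state_f n c u) (state_psi n u) (state_phi n u) (of_nat k) = E k" for u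
  proof -
    have bound: "1 + norm (energy n (state_f n c u) (state_psi n u) (state_phi n u) (of_nat k)) \<le> M"
      if "k \<le> Suc n" for k
      using levels that member_le_sum[of k "{..Suc n}" "\<lambda>k. norm (E k)"] by (simp add: M_def)
    have "norm (seq_poly (Suc n) (state_f n c u) (of_nat k)) \<le> M" if "k \<le> Suc n" for k
      using norm_seq_poly_le_energy(1)[OF symmetric_data_state[of n c u], where n = n and x = "real k"]
        bound[OF that] by simp
    then have f: "norm (state_f n c u j) \<le> K1 * M" if "j \<le> Suc n" for j
      using K1 that by blast
    have "norm (seq_poly n (state_psi n u) (of_nat k)) \<le> M" if "k \<le> n" for k
      using norm_seq_poly_le_energy(2)[OF symmetric_data_state[of n c u], where n = n and x = "real k"]
        bound[of k] that by simp
    then have psi: "norm (state_psi n u l) \<le> K2 * M" if "l \<le> n" for l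
      using K2 that by blast
    show ?thesis
      using norm_state_le[OF u, of c "K1 * M" "K2 * M"] f psi
        order_trans[OF norm_ge_zero f[of 0]] order_trans[OF norm_ge_zero psi[of 0]] by simp
  qed
  then show ?thesis by blast
qed

type_synonym rhs = "(nat \<Rightarrow> complex) \<Rightarrow> (nat \<Rightarrow> complex) \<Rightarrow> (nat \<Rightarrow> complex) \<Rightarrow> nat \<Rightarrow> complex"

definition preserves_symmetry :: "rhs \<Rightarrow> rhs \<Rightarrow> rhs \<Rightarrow> bool" where
  "preserves_symmetry rF rP rQ \<longleftrightarrow>
     (\<forall>f p q. symmetric_data f p q \<longrightarrow> symmetric_data (rF f p q) (rP f p q) (rQ f p q))"

text \<open>The identity below says that the time derivative of \<open>energy n f p q X\<close> along the flow
  of \<open>(rF, rP, rQ)\<close> vanishes.\<close>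

definition conserves_energy :: "nat \<Rightarrow> rhs \<Rightarrow> rhs \<Rightarrow> rhs \<Rightarrow> bool" where
  "conserves_energy n rF rP rQ \<longleftrightarrow> (\<forall>f p q X. f (Suc n) \<noteq> 0 \<longrightarrow>
     2 * seq_poly (Suc n) f X * seq_poly (Suc n) (rF f p q) X
       = seq_poly n (rP f p q) X * seq_poly n q X + seq_poly n p X * seq_poly n (rQ f p q) X)"

definition reduced_field :: "nat \<Rightarrow> real \<Rightarrow> rhs \<Rightarrow> rhs \<Rightarrow> state \<Rightarrow> state" where
  "reduced_field n c rF rP u =
     (bcf_of_seq n (\<lambda>j. Re (rF (state_f n c u) (state_psi n u) (state_phi n u) j)),
      bcf_of_seq n (rP (state_f n c u) (state_psi n u) (state_phi n u)))"

lemma lipschitz_on_bounded_reduced_field: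
  assumes "\<And>j. lipschitz_on_bounded (\<lambda>u. rF (state_f n c u) (state_psi n u) (state_phi n u) j)"
    and "\<And>l. lipschitz_on_bounded (\<lambda>u. rP (state_f n c u) (state_psi n u) (state_phi n u) l)"
  shows "lipschitz_on_bounded (reduced_field n c rF rP)"
  unfolding reduced_field_def
  by (intro lipschitz_on_bounded_Pair lipschitz_on_bounded_bcf_of_seq
      lipschitz_on_bounded_linear_compose[OF assms(1) bounded_linear_Re] assms(2))

context
  fixes n :: nat and c :: real and rF rP rQ :: rhs and w :: "real \<Rightarrow> state" and s :: "real \<Rightarrow> real"
  assumes flow: "\<And>t. (w has_vector_derivative s t *\<^sub>R reduced_field n c rF rP (w t)) (at t)"
    and sym: "preserves_symmetry rF rP rQ" and top: "\<And>f p q. rF f p q (Suc n) = 0"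
begin

lemma flow_coordinates_has_derivative:
  "((\<lambda>t. bcf_nth (fst (w t)) j) has_vector_derivative
      s t * (if j \<le> n then Re (rF (state_f n c (w t)) (state_psi n (w t)) (state_phi n (w t)) j) else 0)) (at t)"
  "((\<lambda>t. bcf_nth (snd (w t)) j) has_vector_derivative
      of_real (s t) * (if j \<le> n then rP (state_f n c (w t)) (state_psi n (w t)) (state_phi n (w t)) j else 0)) (at t)"
  using has_vector_derivative_bcf_nth[OF bounded_linear.has_vector_derivative[OF bounded_linear_fst flow[of t]], of j]
    has_vector_derivative_bcf_nth[OF bounded_linear.has_vector_derivative[OF bounded_linear_snd flow[of t]], of j]
  by (simp_all add: reduced_field_def scaleR_conv_of_real)

lemma flow_state_f_has_derivative:
  assumes "j \<le> Suc n"
  shows "((\<lambda>t. state_f n c (w t) j) has_vector_derivative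
           of_real (s t) * rF (state_f n c (w t)) (state_psi n (w t)) (state_phi n (w t)) j) (at t)"
proof (cases "j \<le> n")
  case True
  let ?r = "rF (state_f n c (w t)) (state_psi n (w t)) (state_phi n (w t)) j"
  have "((\<lambda>t. bcf_nth (fst (w t)) j) has_real_derivative s t * Re ?r) (at t)"
    using flow_coordinates_has_derivative(1)[of j t] True
    by (simp add: has_real_derivative_iff_has_vector_derivative)
  moreover have "of_real (Re ?r) = ?r"
    using sym symmetric_data_state unfolding preserves_symmetry_def symmetric_data_def
    by (blast intro: of_real_Re_cnj_fixed)
  ultimately have "((\<lambda>t. of_real (bcf_nth (fst (w t)) j)) has_vector_derivative of_real (s t) * ?r) (at t)"
    using has_vector_derivative_of_real by (metis of_real_mult)
  then show ?thesis using True by (simp add: state_f_def)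
next
  case False
  then have "j = Suc n" using assms by simp
  then show ?thesis using top by (simp add: state_f_def)
qed

lemma flow_state_psi_has_derivative:
  assumes "l \<le> n"
  shows "((\<lambda>t. state_psi n (w t) l) has_vector_derivative
           of_real (s t) * rP (state_f n c (w t)) (state_psi n (w t)) (state_phi n (w t)) l) (at t)"
  using flow_coordinates_has_derivative(2)[of l t] assms by (simp add: state_psi_def)

lemma flow_state_phi_has_derivative:
  assumes "l \<le> n"
  shows "((\<lambda>t. state_phi n (w t) l) has_vector_derivative
           of_real (s t) * rQ (state_f n c (w t)) (state_psi n (w t)) (state_phi n (w t)) l) (at t)"
proof -
  have "rQ (state_f n c (w t)) (state_psi n (w t)) (state_phi n (w t)) l
      = - cnj (rP (state_f n c (w t)) (state_psi n (w t)) (state_phi n (w t)) l)"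
    using sym symmetric_data_state unfolding preserves_symmetry_def symmetric_data_def by blast
  moreover have "state_phi n (w t') l = - cnj (state_psi n (w t') l)" for t'
    by (simp add: state_phi_def)
  ultimately show ?thesis
    using has_vector_derivative_minus[OF has_vector_derivative_cnj[OF flow_state_psi_has_derivative[OF assms]]]
    by simp
qed

lemma flow_vanishes_beyond:
  assumes "vanishes_beyond n (w 0)"
  shows "vanishes_beyond n (w t)"
proof -
  have "bcf_nth (fst (w t)) j = bcf_nth (fst (w 0)) j \<and> bcf_nth (snd (w t)) j = bcf_nth (snd (w 0)) j"
    if "n < j" for j
    using that flow_coordinates_has_derivative[of j] by (intro conjI has_vector_derivative_zero_imp_eq) simp_all
  then show ?thesis using assms by (simp add: vanishes_beyond_def)
qed

lemma flow_energy_constant: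
  assumes cons: "conserves_energy n rF rP rQ" and "c \<noteq> 0"
  shows "energy n (state_f n c (w t)) (state_psi n (w t)) (state_phi n (w t)) X
       = energy n (state_f n c (w 0)) (state_psi n (w 0)) (state_phi n (w 0)) X"
proof (rule has_vector_derivative_zero_imp_eq)
  fix t
  let ?F = "state_f n c (w t)" and ?P = "state_psi n (w t)" and ?Q = "state_phi n (w t)"
  let ?dF = "seq_poly (Suc n) (rF ?F ?P ?Q) X" and ?dP = "seq_poly n (rP ?F ?P ?Q) X"
    and ?dQ = "seq_poly n (rQ ?F ?P ?Q) X"
  let ?Fx = "seq_poly (Suc n) ?F X" and ?Px = "seq_poly n ?P X" and ?Qx = "seq_poly n ?Q X"
  have dF: "((\<lambda>t. seq_poly (Suc n) (state_f n c (w t)) X) has_vector_derivative of_real (s t) * ?dF) (at t)"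
    using has_vector_derivative_seq_poly[OF flow_state_f_has_derivative] by (simp add: seq_poly_cmult)
  have dP: "((\<lambda>t. seq_poly n (state_psi n (w t)) X) has_vector_derivative of_real (s t) * ?dP) (at t)"
    using has_vector_derivative_seq_poly[OF flow_state_psi_has_derivative] by (simp add: seq_poly_cmult)
  have dQ: "((\<lambda>t. seq_poly n (state_phi n (w t)) X) has_vector_derivative of_real (s t) * ?dQ) (at t)"
    using has_vector_derivative_seq_poly[OF flow_state_phi_has_derivative] by (simp add: seq_poly_cmult)
  have "((\<lambda>t. energy n (state_f n c (w t)) (state_psi n (w t)) (state_phi n (w t)) X) has_vector_derivative
      (?Fx * (of_real (s t) * ?dF) + of_real (s t) * ?dF * ?Fx)
      - (?Px * (of_real (s t) * ?dQ) + of_real (s t) * ?dP * ?Qx)) (at t)"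
    unfolding energy_def power2_eq_square by (intro has_vector_derivative_diff has_vector_derivative_mult dF dP dQ)
  moreover have "(?Fx * (of_real (s t) * ?dF) + of_real (s t) * ?dF * ?Fx)
      - (?Px * (of_real (s t) * ?dQ) + of_real (s t) * ?dP * ?Qx)
      = of_real (s t) * (2 * ?Fx * ?dF - (?dP * ?Qx + ?Px * ?dQ))"
    by algebra
  moreover have "2 * ?Fx * ?dF = ?dP * ?Qx + ?Px * ?dQ"
    using cons \<open>c \<noteq> 0\<close> unfolding conserves_energy_def by simp
  ultimately show "((\<lambda>t. energy n (state_f n c (w t)) (state_psi n (w t)) (state_phi n (w t)) X) has_vector_derivative 0) (at t)"
    by simp
qed
end

lemma reduced_flow_exists:
  fixes rF rP rQ :: rhs
  assumes lip_f: "\<And>j. lipschitz_on_bounded (\<lambda>u. rF (state_f n c u) (state_psi n u) (state_phi n u) j)"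
    and lip_psi: "\<And>l. lipschitz_on_bounded (\<lambda>u. rP (state_f n c u) (state_psi n u) (state_phi n u) l)"
    and sym: "preserves_symmetry rF rP rQ" and top: "\<And>f p q. rF f p q (Suc n) = 0"
    and cons: "conserves_energy n rF rP rQ" and "c \<noteq> 0" and u0: "vanishes_beyond n u0"
  obtains w where "w 0 = u0" "\<And>t. (w has_vector_derivative reduced_field n c rF rP (w t)) (at t)"
proof -
  \<comment> \<open>The cut-off flow conserves the energy levels too, so it stays in the ball of radius
      \<open>B < R\<close>, where the cutoff is inactive.\<close>
  let ?G = "reduced_field n c rF rP"
  let ?E = "\<lambda>k. energy n (state_f n c u0) (state_psi n u0) (state_phi n u0) (of_nat k)"
  obtain B where B: "\<And>u. vanishes_beyond n u \<Longrightarrow>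
      \<forall>k\<le>Suc n. energy n (state_f n c u) (state_psi n u) (state_phi n u) (of_nat k) = ?E k \<Longrightarrow> norm u \<le> B"
    using bounded_energy_levels[of n c ?E] by blast
  define R where "R = max B 0 + 1"
  have R: "0 < R" "B < R" by (auto simp: R_def)
  have "lipschitz_on_bounded ?G"
    by (rule lipschitz_on_bounded_reduced_field[OF lip_f lip_psi])
  then obtain L M where G_lip: "L-lipschitz_on (cball 0 (2 * R)) ?G"
    and G_bound: "\<And>u. u \<in> cball 0 (2 * R) \<Longrightarrow> norm (?G u) \<le> M"
    using lipschitz_on_boundedE[where R = "2 * R"] by blast
  obtain w where w0: "w 0 = u0"
    and w: "\<And>t. (w has_vector_derivative radial_cutoff R (w t) *\<^sub>R ?G (w t)) (at t)"
    using lipschitz_ode_global_solution[OF lipschitz_on_cutoff_field[OF R(1) G_lip G_bound], where x\<^sub>0 = u0]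
    by blast
  have "norm (w t) \<le> B" for t
  proof (rule B)
    show "vanishes_beyond n (w t)"
      using flow_vanishes_beyond[OF w sym top] w0 u0 by simp
    show "\<forall>k\<le>Suc n. energy n (state_f n c (w t)) (state_psi n (w t)) (state_phi n (w t)) (of_nat k) = ?E k"
      using flow_energy_constant[OF w sym top cons \<open>c \<noteq> 0\<close>] w0 by simp
  qed
  then have "radial_cutoff R (w t) = 1" for t
    using R by (intro radial_cutoff_eq_1) (auto intro: order_trans[of _ B] less_imp_le)
  then show ?thesis using that w0 w by simp
qed

lemma global_solution_of_reduced_flow:
  fixes rF rP rQ :: rhs
  assumes flow: "\<And>t. (w has_vector_derivative reduced_field n c rF rP (w t)) (at t)"
    and sym: "preserves_symmetry rF rP rQ" and top: "\<And>f p q. rF f p q (Suc n) = 0" and "c \<noteq> 0"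
    and f0: "\<And>j. j \<le> Suc n \<Longrightarrow> state_f n c (w 0) j = f0 j"
    and psi0: "\<And>l. l \<le> n \<Longrightarrow> state_psi n (w 0) l = psi0 l"
    and phi0: "\<And>l. l \<le> n \<Longrightarrow> state_phi n (w 0) l = phi0 l"
  shows "global_solution n rF rP rQ f0 psi0 phi0
           (\<lambda>t. state_f n c (w t)) (\<lambda>t. state_psi n (w t)) (\<lambda>t. state_phi n (w t))"
proof -
  have flow': "\<And>t. (w has_vector_derivative 1 *\<^sub>R reduced_field n c rF rP (w t)) (at t)"
    using flow by simp
  show ?thesis
    unfolding global_solution_def
  proof (intro conjI allI impI)
    fix t :: real and j l :: nat
    show "j \<le> Suc n \<Longrightarrow> ((\<lambda>t. state_f n c (w t) j) has_vector_derivative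
        rF (state_f n c (w t)) (state_psi n (w t)) (state_phi n (w t)) j) (at t)"
      using flow_state_f_has_derivative[OF flow' sym top, of j t] by simp
    show "l \<le> n \<Longrightarrow> ((\<lambda>t. state_psi n (w t) l) has_vector_derivative
        rP (state_f n c (w t)) (state_psi n (w t)) (state_phi n (w t)) l) (at t)"
      using flow_state_psi_has_derivative[OF flow' sym top, of l t] by simp
    show "l \<le> n \<Longrightarrow> ((\<lambda>t. state_phi n (w t) l) has_vector_derivative
        rQ (state_f n c (w t)) (state_psi n (w t)) (state_phi n (w t)) l) (at t)"
      using flow_state_phi_has_derivative[OF flow' sym top, of l t] by simp
    show "state_f n c (w t) (Suc n) \<noteq> 0" using \<open>c \<noteq> 0\<close> by simp
  qed (use f0 psi0 phi0 in simp_all)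
qed

theorem global_symmetric_solution:
  fixes rF rP rQ :: rhs
  assumes lip_f: "\<And>c j. lipschitz_on_bounded (\<lambda>u. rF (state_f n c u) (state_psi n u) (state_phi n u) j)"
    and lip_psi: "\<And>c l. lipschitz_on_bounded (\<lambda>u. rP (state_f n c u) (state_psi n u) (state_phi n u) l)"
    and sym: "preserves_symmetry rF rP rQ" and top: "\<And>f p q. rF f p q (Suc n) = 0"
    and cons: "conserves_energy n rF rP rQ"
    and "f0 (Suc n) \<noteq> 0" and f0_real: "\<forall>j\<le>Suc n. cnj (f0 j) = f0 j"
    and phi0: "\<forall>l\<le>n. phi0 l = - cnj (psi0 l)"
  shows "\<exists>F P Q. global_solution n rF rP rQ f0 psi0 phi0 F P Q \<and>
           (\<forall>t. (\<forall>j\<le>Suc n. cnj (F t j) = F t j) \<and> (\<forall>l\<le>n. Q t l = - cnj (P t l)))"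
proof -
  define c where "c = Re (f0 (Suc n))"
  define u0 :: state where "u0 = (bcf_of_seq n (\<lambda>j. Re (f0 j)), bcf_of_seq n psi0)"
  have real_f0: "of_real (Re (f0 j)) = f0 j" if "j \<le> Suc n" for j
    using f0_real that by (simp add: of_real_Re_cnj_fixed)
  then have "c \<noteq> 0" using \<open>f0 (Suc n) \<noteq> 0\<close> by (metis c_def le_refl of_real_0)
  have "vanishes_beyond n u0" by (simp add: vanishes_beyond_def u0_def)
  then obtain w where w0: "w 0 = u0"
    and flow: "\<And>t. (w has_vector_derivative reduced_field n c rF rP (w t)) (at t)"
    using reduced_flow_exists[OF lip_f lip_psi sym top cons \<open>c \<noteq> 0\<close>] by blast
  have "global_solution n rF rP rQ f0 psi0 phi0
      (\<lambda>t. state_f n c (w t)) (\<lambda>t. state_psi n (w t)) (\<lambda>t. state_phi n (w t))"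
    by (rule global_solution_of_reduced_flow[OF flow sym top \<open>c \<noteq> 0\<close>])
       (use real_f0 phi0 in \<open>auto simp: w0 u0_def state_f_def state_psi_def state_phi_def c_def le_Suc_eq\<close>)
  moreover have "symmetric_data (state_f n c (w t)) (state_psi n (w t)) (state_phi n (w t))" for t
    by (rule symmetric_data_state)
  ultimately show ?thesis unfolding symmetric_data_def by blast
qed

section \<open>The t- and x-systems\<close>

lemma seq_poly_shiftz_1: "seq_poly m (shiftz 1 g) X = X * (seq_poly m g X - g m * X ^ m)"
  by (induction m) (simp_all add: seq_poly_def shiftz_def algebra_simps)

lemma seq_poly_shiftz_2:
  "seq_poly m (shiftz 2 g) X = X * (X * (seq_poly m g X - g m * X ^ m) - shiftz 1 g m * X ^ m)"
proof -
  have "shiftz 2 g = shiftz 1 (shiftz 1 g)"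
    by (auto simp: shiftz_def fun_eq_iff numeral_2_eq_2)
  then show ?thesis by (simp only: seq_poly_shiftz_1)
qed

lemma shiftz_cutoff: "l \<le> m \<Longrightarrow> shiftz k (cutoff m g) l = shiftz k g l"
  by (auto simp: shiftz_def cutoff_def)

lemma cutoff_le: "l \<le> m \<Longrightarrow> cutoff m g l = g l"
  by (simp add: cutoff_def)

lemma x_rhs_f_top: "x_rhs_f n f p q (Suc n) = 0"
  by (simp add: x_rhs_f_def cutoff_def Let_def)

lemma seq_poly_x_rhs_f:
  "seq_poly (Suc n) (x_rhs_f n f p q) X
     = \<i> * coef_b n f p q * seq_poly n p X + \<i> * coef_a n f p q * seq_poly n q X"
proof -
  have "seq_poly n (x_rhs_f n f p q) X
      = seq_poly n (\<lambda>j. \<i> * coef_b n f p q * p j + \<i> * coef_a n f p q * q j) X"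
    by (rule seq_poly_cong) (simp add: x_rhs_f_def cutoff_def Let_def)
  then show ?thesis by (simp add: seq_poly_Suc x_rhs_f_top seq_poly_add seq_poly_cmult)
qed

lemma seq_poly_x_rhs_psi:
  "seq_poly n (x_rhs_psi n f p q) X
     = 2 * \<i> * coef_a n f p q * seq_poly n f X - 2 * \<i> * (X * (seq_poly n p X - p n * X ^ n))"
proof -
  have "seq_poly n (x_rhs_psi n f p q) X
      = seq_poly n (\<lambda>l. 2 * \<i> * coef_a n f p q * f l - 2 * \<i> * shiftz 1 p l) X"
    by (rule seq_poly_cong) (simp add: x_rhs_psi_def cutoff_le shiftz_cutoff Let_def)
  then show ?thesis by (simp only: seq_poly_diff seq_poly_cmult seq_poly_shiftz_1)
qed

lemma seq_poly_x_rhs_phi: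
  "seq_poly n (x_rhs_phi n f p q) X
     = 2 * \<i> * coef_b n f p q * seq_poly n f X + 2 * \<i> * (X * (seq_poly n q X - q n * X ^ n))"
proof -
  have "seq_poly n (x_rhs_phi n f p q) X
      = seq_poly n (\<lambda>l. 2 * \<i> * coef_b n f p q * f l + 2 * \<i> * shiftz 1 q l) X"
    by (rule seq_poly_cong) (simp add: x_rhs_phi_def cutoff_le shiftz_cutoff Let_def)
  then show ?thesis by (simp only: seq_poly_add seq_poly_cmult seq_poly_shiftz_1)
qed

lemma conserves_energy_x: "conserves_energy n (x_rhs_f n) (x_rhs_psi n) (x_rhs_phi n)"
  unfolding conserves_energy_def
proof (intro allI impI)
  fix f p q :: "nat \<Rightarrow> complex" and X :: complex
  assume "f (Suc n) \<noteq> 0"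
  then show "2 * seq_poly (Suc n) f X * seq_poly (Suc n) (x_rhs_f n f p q) X
      = seq_poly n (x_rhs_psi n f p q) X * seq_poly n q X + seq_poly n p X * seq_poly n (x_rhs_phi n f p q) X"
    unfolding seq_poly_x_rhs_f seq_poly_x_rhs_psi seq_poly_x_rhs_phi seq_poly_Suc[of n f]
    by (simp add: coef_a_def coef_b_def field_simps)
qed

lemma preserves_symmetry_x: "preserves_symmetry (x_rhs_f n) (x_rhs_psi n) (x_rhs_phi n)"
  unfolding preserves_symmetry_def symmetric_data_def
proof (intro allI impI conjI)
  fix f p q :: "nat \<Rightarrow> complex" and j l :: nat
  assume "(\<forall>j. cnj (f j) = f j) \<and> (\<forall>l. q l = - cnj (p l))"
  then have f: "\<And>j. cnj (f j) = f j" and q: "q = (\<lambda>l. - cnj (p l))" by auto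
  show "cnj (x_rhs_f n f p q j) = x_rhs_f n f p q j"
    by (simp add: q f x_rhs_f_def coef_a_def coef_b_def cutoff_def Let_def algebra_simps)
  show "x_rhs_phi n f p q l = - cnj (x_rhs_psi n f p q l)"
    by (simp add: q f x_rhs_phi_def x_rhs_psi_def coef_a_def coef_b_def cutoff_def shiftz_def Let_def algebra_simps)
qed

lemma lipschitz_on_bounded_x_rhs:
  "lipschitz_on_bounded (\<lambda>u. x_rhs_f n (state_f n c u) (state_psi n u) (state_phi n u) j)"
  "lipschitz_on_bounded (\<lambda>u. x_rhs_psi n (state_f n c u) (state_psi n u) (state_phi n u) j)"
  unfolding x_rhs_f_def x_rhs_psi_def coef_a_def coef_b_def cutoff_def shiftz_def Let_def state_f_Suc
  by (intro lipschitz_on_bounded_intros)+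

lemma t_rhs_f_top: "t_rhs_f n f p q (Suc n) = 0"
  by (simp add: t_rhs_f_def coef_a_def coef_b_def cutoff_def shiftz_def Let_def algebra_simps)

lemma seq_poly_t_rhs_f:
  "seq_poly (Suc n) (t_rhs_f n f p q) X
     = coef_d n f p q * seq_poly n p X - coef_c n f p q * seq_poly n q X
       + 2 * \<i> * coef_b n f p q * (X * (seq_poly n p X - p n * X ^ n))
       + 2 * \<i> * coef_a n f p q * (X * (seq_poly n q X - q n * X ^ n))"
proof -
  have "seq_poly n (t_rhs_f n f p q) X
      = seq_poly n (\<lambda>j. coef_d n f p q * p j - coef_c n f p q * q j
          + 2 * \<i> * coef_b n f p q * shiftz 1 p j + 2 * \<i> * coef_a n f p q * shiftz 1 q j) X"
    by (rule seq_poly_cong) (simp add: t_rhs_f_def cutoff_le shiftz_cutoff Let_def)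
  then show ?thesis
    by (simp only: seq_poly_Suc t_rhs_f_top seq_poly_add seq_poly_diff seq_poly_cmult seq_poly_shiftz_1)
       simp
qed

lemma seq_poly_t_rhs_psi:
  "seq_poly n (t_rhs_psi n f p q) X
     = - 2 * coef_c n f p q * seq_poly n f X + 4 * \<i> * coef_a n f p q * (X * (seq_poly n f X - f n * X ^ n))
       + 2 * \<i> * coef_a n f p q * coef_b n f p q * seq_poly n p X
       - 4 * \<i> * (X * (X * (seq_poly n p X - p n * X ^ n) - shiftz 1 p n * X ^ n))"
proof -
  have "seq_poly n (t_rhs_psi n f p q) X
      = seq_poly n (\<lambda>l. - 2 * coef_c n f p q * f l + 4 * \<i> * coef_a n f p q * shiftz 1 f l
          + 2 * \<i> * coef_a n f p q * coef_b n f p q * p l - 4 * \<i> * shiftz 2 p l) X"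
    by (rule seq_poly_cong) (simp add: t_rhs_psi_def cutoff_le shiftz_cutoff Let_def)
  then show ?thesis
    by (simp only: seq_poly_add seq_poly_diff seq_poly_cmult seq_poly_shiftz_1 seq_poly_shiftz_2)
qed

lemma seq_poly_t_rhs_phi:
  "seq_poly n (t_rhs_phi n f p q) X
     = 2 * coef_d n f p q * seq_poly n f X + 4 * \<i> * coef_b n f p q * (X * (seq_poly n f X - f n * X ^ n))
       - 2 * \<i> * coef_a n f p q * coef_b n f p q * seq_poly n q X
       + 4 * \<i> * (X * (X * (seq_poly n q X - q n * X ^ n) - shiftz 1 q n * X ^ n))"
proof -
  have "seq_poly n (t_rhs_phi n f p q) X
      = seq_poly n (\<lambda>l. 2 * coef_d n f p q * f l + 4 * \<i> * coef_b n f p q * shiftz 1 f l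
          - 2 * \<i> * coef_a n f p q * coef_b n f p q * q l + 4 * \<i> * shiftz 2 q l) X"
    by (rule seq_poly_cong) (simp add: t_rhs_phi_def cutoff_le shiftz_cutoff Let_def)
  then show ?thesis
    by (simp only: seq_poly_add seq_poly_diff seq_poly_cmult seq_poly_shiftz_1 seq_poly_shiftz_2)
qed

lemma conserves_energy_t: "conserves_energy n (t_rhs_f n) (t_rhs_psi n) (t_rhs_phi n)"
  unfolding conserves_energy_def
proof (intro allI impI)
  fix f p q :: "nat \<Rightarrow> complex" and X :: complex
  assume top: "f (Suc n) \<noteq> 0"
  define a b c d where "a = coef_a n f p q" and "b = coef_b n f p q"
    and "c = coef_c n f p q" and "d = coef_d n f p q"
  \<comment> \<open>All terms not cancelling identically are divisible by \<open>X ^ Suc n\<close>; expressing the top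
      coefficients through \<open>a, b, c, d\<close> makes them cancel.\<close>
  have top_coeffs: "p n = a * f (Suc n)" "q n = - b * f (Suc n)"
    "shiftz 1 p n = a * f n + \<i> * f (Suc n) * c / 2" "shiftz 1 q n = - b * f n + \<i> * f (Suc n) * d / 2"
    using top by (simp_all add: a_def b_def c_def d_def coef_a_def coef_b_def coef_c_def coef_d_def
        field_simps power2_eq_square)
  show "2 * seq_poly (Suc n) f X * seq_poly (Suc n) (t_rhs_f n f p q) X
      = seq_poly n (t_rhs_psi n f p q) X * seq_poly n q X + seq_poly n p X * seq_poly n (t_rhs_phi n f p q) X"
    unfolding seq_poly_t_rhs_f seq_poly_t_rhs_psi seq_poly_t_rhs_phi seq_poly_Suc[of n f]
      a_def[symmetric] b_def[symmetric] c_def[symmetric] d_def[symmetric] top_coeffs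
    by (simp add: algebra_simps)
qed

lemma preserves_symmetry_t: "preserves_symmetry (t_rhs_f n) (t_rhs_psi n) (t_rhs_phi n)"
  unfolding preserves_symmetry_def symmetric_data_def
proof (intro allI impI conjI)
  fix f p q :: "nat \<Rightarrow> complex" and j l :: nat
  assume "(\<forall>j. cnj (f j) = f j) \<and> (\<forall>l. q l = - cnj (p l))"
  then have f: "\<And>j. cnj (f j) = f j" and q: "q = (\<lambda>l. - cnj (p l))" by auto
  show "cnj (t_rhs_f n f p q j) = t_rhs_f n f p q j"
    by (simp add: q f t_rhs_f_def coef_a_def coef_b_def coef_c_def coef_d_def cutoff_def shiftz_def
        Let_def algebra_simps)
  show "t_rhs_phi n f p q l = - cnj (t_rhs_psi n f p q l)"
    by (simp add: q f t_rhs_phi_def t_rhs_psi_def coef_a_def coef_b_def coef_c_def coef_d_def cutoff_def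
        shiftz_def Let_def algebra_simps)
qed

lemma lipschitz_on_bounded_t_rhs:
  "lipschitz_on_bounded (\<lambda>u. t_rhs_f n (state_f n c u) (state_psi n u) (state_phi n u) j)"
  "lipschitz_on_bounded (\<lambda>u. t_rhs_psi n (state_f n c u) (state_psi n u) (state_phi n u) j)"
  unfolding t_rhs_f_def t_rhs_psi_def coef_a_def coef_b_def coef_c_def coef_d_def cutoff_def shiftz_def
    Let_def state_f_Suc
  by (intro lipschitz_on_bounded_intros)+

theorem lemma2:
  fixes n :: nat and f0 psi0 phi0 :: "nat \<Rightarrow> complex"
  assumes "f0 (Suc n) \<noteq> 0"
    and "\<forall>j\<le>Suc n. cnj (f0 j) = f0 j"
    and "\<forall>l\<le>n. phi0 l = - cnj (psi0 l)"
  shows "(\<exists>F P Q. global_solution n (t_rhs_f n) (t_rhs_psi n) (t_rhs_phi n) f0 psi0 phi0 F P Q \<and>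
            (\<forall>t. (\<forall>j\<le>Suc n. cnj (F t j) = F t j) \<and> (\<forall>l\<le>n. Q t l = - cnj (P t l))))
       \<and> (\<exists>F P Q. global_solution n (x_rhs_f n) (x_rhs_psi n) (x_rhs_phi n) f0 psi0 phi0 F P Q \<and>
            (\<forall>x. (\<forall>j\<le>Suc n. cnj (F x j) = F x j) \<and> (\<forall>l\<le>n. Q x l = - cnj (P x l))))"
  using global_symmetric_solution[OF lipschitz_on_bounded_t_rhs preserves_symmetry_t t_rhs_f_top
      conserves_energy_t assms]
    global_symmetric_solution[OF lipschitz_on_bounded_x_rhs preserves_symmetry_x x_rhs_f_top
      conserves_energy_x assms]
  by blast

end
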